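(* Let $\Gamma$ be a web and $G=SU(3)$. The set of homomorphisms $\rho:\pi_1(S^3-\Gamma)\to SU(3)$ such that every meridian is sent to a matrix of trace $-1$ is in one-to-one correspondence with the set of assignments of complex lines in $\mathbb{C}^3$ to the edges of $\Gamma$ such that the three lines at any vertex are mutually Hermitian orthogonal.
   Context: A web is an oriented graph $\Gamma$ embedded in $S^2\subset S^3$ each of whose vertices is trivalent and is a source or a sink. With basepoint above the plane, each edge $e_i$ has a meridian $x_i$ (a loop encircling $e_i$ once by the right hand rule), and $\pi_1(S^3-\Gamma)=\langle x_i\mid x_{a}x_{b}x_{c}=e\ \text{for each vertex with incident edges } e_a,e_b,e_c\rangle$. The correspondence sends $\rho$ to the assignment of the $+1$-eigenspace of $\rho(x_i)$ to $e_i$. *)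

theory Defs
  imports "HOL-Analysis.Analysis" "HOL-Library.FuncSet"
begin

type_synonym cmat3 = "complex ^3 ^3"
type_synonym cvec3 = "complex ^3"

definition mtrace :: "cmat3 \<Rightarrow> complex" where
  "mtrace A = (\<Sum>i\<in>UNIV. A $ i $ i)"

definition cadjoint :: "cmat3 \<Rightarrow> cmat3" where
  "cadjoint A = (\<chi> i j. cnj (A $ j $ i))"

definition SU3 :: "cmat3 set" where
  "SU3 = {A. A ** cadjoint A = mat 1 \<and> det A = 1}"

definition hinner :: "cvec3 \<Rightarrow> cvec3 \<Rightarrow> complex" where
  "hinner u v = (\<Sum>i\<in>UNIV. u $ i * cnj (v $ i))"

definition complex_line :: "cvec3 set \<Rightarrow> bool" where
  "complex_line L \<longleftrightarrow> (\<exists>v. v \<noteq> 0 \<and> L = {c *s v | c. True})"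

definition herm_orth :: "cvec3 set \<Rightarrow> cvec3 set \<Rightarrow> bool" where
  "herm_orth L M \<longleftrightarrow> (\<forall>u\<in>L. \<forall>v\<in>M. hinner u v = 0)"

definition eigenspace1 :: "cmat3 \<Rightarrow> cvec3 set" where
  "eigenspace1 A = {v. A *v v = v}"

text \<open>Combinatorial data of a web: edge set E, vertex set V, tail/head maps,
  and for each vertex the ordered triple (a,b,c) of incident edges in the order
  (given by the planar embedding) used in the Wirtinger-type relation x_a x_b x_c = e.\<close>
definition web :: "'e set \<Rightarrow> 'v set \<Rightarrow> ('e \<Rightarrow> 'v) \<Rightarrow> ('e \<Rightarrow> 'v) \<Rightarrow> ('v \<Rightarrow> 'e \<times> 'e \<times> 'e) \<Rightarrow> bool" where
  "web E V src tgt tri \<longleftrightarrow> finite E \<and> finite V \<and>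
     (\<forall>e\<in>E. src e \<in> V \<and> tgt e \<in> V \<and> src e \<noteq> tgt e) \<and>
     (\<forall>v\<in>V. case tri v of (a, b, c) \<Rightarrow>
        a \<noteq> b \<and> b \<noteq> c \<and> a \<noteq> c \<and>
        {e\<in>E. src e = v \<or> tgt e = v} = {a, b, c} \<and>
        ((src a = v \<and> src b = v \<and> src c = v) \<or> (tgt a = v \<and> tgt b = v \<and> tgt c = v)))"

text \<open>Homomorphisms pi_1(S^3 - Gamma) -> SU(3) with every meridian of trace -1,
  identified (via the presentation) with their values on the meridian generators.\<close>
definition trace_minus_one_reps ::
  "'e set \<Rightarrow> 'v set \<Rightarrow> ('v \<Rightarrow> 'e \<times> 'e \<times> 'e) \<Rightarrow> ('e \<Rightarrow> cmat3) set" where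
  "trace_minus_one_reps E V tri =
     {r \<in> E \<rightarrow>\<^sub>E SU3. (\<forall>e\<in>E. mtrace (r e) = -1) \<and>
        (\<forall>v\<in>V. case tri v of (a, b, c) \<Rightarrow> r a ** r b ** r c = mat 1)}"

definition orth_line_assignments ::
  "'e set \<Rightarrow> 'v set \<Rightarrow> ('v \<Rightarrow> 'e \<times> 'e \<times> 'e) \<Rightarrow> ('e \<Rightarrow> cvec3 set) set" where
  "orth_line_assignments E V tri =
     {L \<in> E \<rightarrow>\<^sub>E Collect complex_line.
        \<forall>v\<in>V. case tri v of (a, b, c) \<Rightarrow>
          herm_orth (L a) (L b) \<and> herm_orth (L b) (L c) \<and> herm_orth (L a) (L c)}"

end

theory Submission
  imports Defs
begin

text \<open>A matrix \<open>A \<in> SU(3)\<close> with \<open>tr A = -1\<close> fixes a unit vector \<open>u\<close>: expanding the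
  characteristic polynomial at 1 gives \<open>det (A - 1) = tr A - tr A\<^sup>* = 0\<close>, the adjugate of \<open>A\<close>
  being \<open>A\<^sup>*\<close>. Its Frobenius distance to the reflection \<open>R\<^sub>u = 2uu\<^sup>* - 1\<close> is then zero, so the
  trace \<open>-1\<close> elements of \<open>SU(3)\<close> are exactly the \<open>R\<^sub>u\<close>, determined by their
  \<open>+1\<close>-eigenline \<open>\<complex>u\<close>. For unit vectors, \<open>R\<^sub>a R\<^sub>b R\<^sub>c = 1\<close> iff \<open>a, b, c\<close> are mutually
  orthogonal: if so, \<open>aa\<^sup>* + bb\<^sup>* + cc\<^sup>* = 1\<close> gives \<open>R\<^sub>a R\<^sub>b = R\<^sub>c\<close>; conversely the relation
  yields \<open>R\<^sub>a R\<^sub>b = R\<^sub>c\<close>, and comparing traces, \<open>4|\<langle>a,b\<rangle>|\<^sup>2 - 1 = -1\<close>. Hence taking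
  eigenlines edge by edge is a bijection that matches the vertex relations with the
  orthogonality conditions.\<close>

lemma matrix_mult_3_nth:
  "((A::'a::comm_ring_1^3^3) ** B) $ i $ j = A$i$1 * B$1$j + A$i$2 * B$2$j + A$i$3 * B$3$j"
  by (simp add: matrix_matrix_mult_def sum_3)

lemma hinner_3: "hinner u v = u$1 * cnj (v$1) + u$2 * cnj (v$2) + u$3 * cnj (v$3)"
  by (simp add: hinner_def sum_3)

lemma cnj_hinner: "cnj (hinner u v) = hinner v u"
  by (simp add: hinner_3 algebra_simps)

lemma hinner_eq_0_commute: "hinner u v = 0 \<longleftrightarrow> hinner v u = 0"
  by (metis cnj_hinner complex_cnj_zero)

lemma hinner_scale: "hinner (c *s u) (d *s v) = c * cnj d * hinner u v"
  by (simp add: hinner_3 algebra_simps)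

lemma norm_vec_power2: "(norm x)\<^sup>2 = (\<Sum>i\<in>UNIV. (norm (x $ i))\<^sup>2)"
  by (simp add: norm_vec_def L2_set_def sum_nonneg)

lemma hinner_self: "hinner v v = of_real ((norm v)\<^sup>2)"
  unfolding hinner_def norm_vec_power2 of_real_sum by (simp only: complex_norm_square)

lemma hinner_self_eq_1_nonzero: "hinner u u = 1 \<Longrightarrow> u \<noteq> 0"
  by (auto simp: hinner_def)

lemma normalize_vector:
  assumes "v \<noteq> 0"
  obtains t where "t \<noteq> 0" "hinner (t *s v) (t *s v) = 1"
proof
  define t where "t = complex_of_real (1 / norm v)"
  show "t \<noteq> 0" using assms by (simp add: t_def)
  have "hinner (t *s v) (t *s v) = t * cnj t * hinner v v"
    by (rule hinner_scale)
  also have "\<dots> = of_real ((1 / norm v)\<^sup>2 * (norm v)\<^sup>2)"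
    by (simp only: hinner_self t_def complex_cnj_complex_of_real of_real_mult power2_eq_square)
  also have "\<dots> = 1" using assms by (simp add: field_simps)
  finally show "hinner (t *s v) (t *s v) = 1" .
qed

definition frobenius :: "cmat3 \<Rightarrow> cmat3 \<Rightarrow> complex" where
  "frobenius A B = (\<Sum>i\<in>UNIV. hinner (A $ i) (B $ i))"

lemma frobenius_self: "frobenius A A = of_real ((norm A)\<^sup>2)"
  by (simp add: frobenius_def hinner_self norm_vec_power2)

lemma frobenius_self_eq_0_iff: "frobenius A A = 0 \<longleftrightarrow> A = 0"
  by (simp add: frobenius_self)

lemma cnj_frobenius: "cnj (frobenius A B) = frobenius B A"
  by (simp add: frobenius_def cnj_hinner)

lemma frobenius_diff_self:
  "frobenius (A - B) (A - B) = frobenius A A - frobenius A B - frobenius B A + frobenius B B"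
  by (simp add: frobenius_def hinner_def sum_subtractf sum.distrib algebra_simps)

lemma frobenius_eq_mtrace: "frobenius A B = mtrace (A ** cadjoint B)"
  by (simp add: frobenius_def hinner_def mtrace_def matrix_matrix_mult_def cadjoint_def)

lemma eigenvector1_exists:
  fixes A :: "'a::field^'n^'n"
  assumes "det (A - mat 1) = 0"
  obtains v where "v \<noteq> 0" "A *v v = v"
proof -
  have "\<not> invertible (A - mat 1)" using assms by (simp add: invertible_det_nz)
  then obtain v where "v \<noteq> 0" "(A - mat 1) *v v = 0"
    by (metis invertible_left_inverse matrix_left_invertible_ker)
  then show thesis using that by (simp add: matrix_vector_mult_diff_rdistrib)
qed

lemma matrix_mult_cadjoint_nth: "(A ** cadjoint B) $ i $ k = hinner (A $ i) (B $ k)"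
  by (simp add: matrix_matrix_mult_def cadjoint_def hinner_def)

lemma mtrace_mat_1: "mtrace (mat 1) = 3"
  by (simp add: mtrace_def mat_def)

definition adjugate3 :: "cmat3 \<Rightarrow> cmat3" where
  "adjugate3 A = (\<chi> i j.
     if i = 1 \<and> j = 1 then A$2$2 * A$3$3 - A$2$3 * A$3$2
     else if i = 1 \<and> j = 2 then A$1$3 * A$3$2 - A$1$2 * A$3$3
     else if i = 1 \<and> j = 3 then A$1$2 * A$2$3 - A$1$3 * A$2$2
     else if i = 2 \<and> j = 1 then A$2$3 * A$3$1 - A$2$1 * A$3$3
     else if i = 2 \<and> j = 2 then A$1$1 * A$3$3 - A$1$3 * A$3$1
     else if i = 2 \<and> j = 3 then A$1$3 * A$2$1 - A$1$1 * A$2$3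
     else if i = 3 \<and> j = 1 then A$2$1 * A$3$2 - A$2$2 * A$3$1
     else if i = 3 \<and> j = 2 then A$1$2 * A$3$1 - A$1$1 * A$3$2
     else A$1$1 * A$2$2 - A$1$2 * A$2$1)"

lemma adjugate3_mult: "adjugate3 A ** A = mat (det A)"
  unfolding vec_eq_iff forall_3 matrix_mult_3_nth det_3
  by (simp add: adjugate3_def mat_def algebra_simps)

lemma SU3_adjugate3: "A \<in> SU3 \<Longrightarrow> adjugate3 A = cadjoint A"
  by (metis (mono_tags, lifting) SU3_def adjugate3_mult matrix_mul_assoc matrix_mul_lid
      matrix_mul_rid mem_Collect_eq)

lemma SU3_trace_minus_one_det:
  assumes "A \<in> SU3" "mtrace A = -1"
  shows "det (A - mat 1) = 0"
proof -
  have det: "det A = 1" using assms(1) by (simp add: SU3_def)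
  have tr: "A$1$1 + A$2$2 + A$3$3 = -1" using assms(2) by (simp add: mtrace_def sum_3)
  have "mtrace (adjugate3 A) = cnj (mtrace A)"
    by (simp add: SU3_adjugate3[OF assms(1)] mtrace_def cadjoint_def)
  then have "mtrace (adjugate3 A) = -1" using assms(2) by simp
  then have "adjugate3 A $1$1 + adjugate3 A $2$2 + adjugate3 A $3$3 = -1"
    by (simp add: mtrace_def sum_3)
  then have "A$2$2 * A$3$3 - A$2$3 * A$3$2 + (A$1$1 * A$3$3 - A$1$3 * A$3$1)
      + (A$1$1 * A$2$2 - A$1$2 * A$2$1) = -1"
    by (simp add: adjugate3_def)
  with tr det show ?thesis
    unfolding det_3 by (simp add: mat_def algebra_simps)
qed

text \<open>For a unit vector \<open>u\<close> this is \<open>2uu\<^sup>* - 1\<close>: the identity on the line through \<open>u\<close>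
  and \<open>-1\<close> on its orthogonal complement.\<close>
definition line_reflection :: "cvec3 \<Rightarrow> cmat3" where
  "line_reflection u = (\<chi> i j. 2 * u$i * cnj (u$j) - (if i = j then 1 else 0))"

lemma line_reflection_nth:
  "line_reflection u $ i $ j = 2 * u$i * cnj (u$j) - (if i = j then 1 else 0)"
  by (simp add: line_reflection_def)

lemma line_reflection_mult:
  "line_reflection u ** line_reflection w = (\<chi> i j. 4 * hinner w u * u$i * cnj (w$j)
     - 2 * u$i * cnj (u$j) - 2 * w$i * cnj (w$j) + (if i = j then 1 else 0))"
  unfolding vec_eq_iff forall_3 matrix_mult_3_nth line_reflection_nth hinner_3
  by (simp add: algebra_simps)

lemma line_reflection_involution:
  "hinner u u = 1 \<Longrightarrow> line_reflection u ** line_reflection u = mat 1"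
  unfolding line_reflection_mult by (simp add: vec_eq_iff mat_def)

lemma cadjoint_line_reflection: "cadjoint (line_reflection u) = line_reflection u"
  by (simp add: vec_eq_iff cadjoint_def line_reflection_nth)

lemma det_line_reflection: "det (line_reflection u) = 2 * hinner u u - 1"
  unfolding det_3 line_reflection_nth hinner_3 by (simp add: algebra_simps)

lemma mtrace_line_reflection: "mtrace (line_reflection u) = 2 * hinner u u - 3"
  unfolding mtrace_def sum_3 line_reflection_nth hinner_3 by (simp add: algebra_simps)

lemma line_reflection_SU3:
  assumes "hinner u u = 1"
  shows "line_reflection u \<in> SU3" "mtrace (line_reflection u) = -1"
  using assms line_reflection_involution[OF assms]
  by (auto simp: SU3_def cadjoint_line_reflection det_line_reflection mtrace_line_reflection)

lemma mtrace_line_reflection_mult: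
  assumes "hinner u u = 1" "hinner w w = 1"
  shows "mtrace (line_reflection u ** line_reflection w) = 4 * hinner w u * cnj (hinner w u) - 1"
proof -
  have "mtrace (line_reflection u ** line_reflection w)
      = 4 * hinner w u * hinner u w - 2 * hinner u u - 2 * hinner w w + 3"
    unfolding line_reflection_mult mtrace_def sum_3 hinner_3 by (simp add: algebra_simps)
  then show ?thesis using assms cnj_hinner[of w u] by simp
qed

lemma line_reflection_mult_vec: "(line_reflection u *v x) $ i = 2 * hinner x u * u$i - x$i"
  unfolding matrix_vector_mult_def hinner_3 line_reflection_nth
  using exhaust_3[of i] by (auto simp: sum_3 algebra_simps)

lemma frobenius_line_reflection: "frobenius A (line_reflection u) = 2 * hinner (A *v u) u - mtrace A"
  unfolding frobenius_def hinner_3 sum_3 line_reflection_nth matrix_vector_mult_def mtrace_def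
  by (simp add: algebra_simps)

text \<open>The squared Frobenius distance from \<open>A\<close> to the reflection is \<open>3 - 3 - 3 + 3\<close>.\<close>
lemma unitary_fixing_unit_vector_eq_line_reflection:
  assumes unitary: "A ** cadjoint A = mat 1" and tr: "mtrace A = -1"
    and unit: "hinner u u = 1" and fixed: "A *v u = u"
  shows "A = line_reflection u"
proof -
  let ?R = "line_reflection u"
  have AA: "frobenius A A = 3" by (simp add: frobenius_eq_mtrace unitary mtrace_mat_1)
  have RR: "frobenius ?R ?R = 3"
    by (simp add: frobenius_eq_mtrace cadjoint_line_reflection line_reflection_involution[OF unit]
        mtrace_mat_1)
  have AR: "frobenius A ?R = 3" by (simp add: frobenius_line_reflection fixed unit tr)
  then have RA: "frobenius ?R A = 3" by (metis cnj_frobenius complex_cnj_numeral)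
  have "frobenius (A - ?R) (A - ?R) = 0"
    by (simp add: frobenius_diff_self AA RR AR RA)
  then show ?thesis by (simp add: frobenius_self_eq_0_iff)
qed

definition line_through :: "cvec3 \<Rightarrow> cvec3 set" where
  "line_through u = {c *s u | c. True}"

lemma mem_line_through: "x \<in> line_through u \<longleftrightarrow> (\<exists>c. x = c *s u)"
  by (simp add: line_through_def)

lemma complex_line_iff_line_through: "complex_line L \<longleftrightarrow> (\<exists>v. v \<noteq> 0 \<and> L = line_through v)"
  by (simp add: complex_line_def line_through_def)

lemma SU3_trace_minus_one_eq:
  "{A \<in> SU3. mtrace A = -1} = line_reflection ` {u. hinner u u = 1}"
proof (intro subset_antisym subsetI)
  fix A assume A: "A \<in> {A \<in> SU3. mtrace A = -1}"
  obtain v where v: "v \<noteq> 0" "A *v v = v"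
    using eigenvector1_exists SU3_trace_minus_one_det A by auto
  obtain t where t: "t \<noteq> 0" "hinner (t *s v) (t *s v) = 1"
    using normalize_vector[OF v(1)] by blast
  have "A *v (t *s v) = t *s v"
    by (simp add: vector_scalar_commute v(2))
  then have "A = line_reflection (t *s v)"
    using A t(2) by (intro unitary_fixing_unit_vector_eq_line_reflection) (auto simp: SU3_def)
  then show "A \<in> line_reflection ` {u. hinner u u = 1}" using t(2) by blast
qed (use line_reflection_SU3 in auto)

lemma eigenspace1_line_reflection:
  assumes "hinner u u = 1"
  shows "eigenspace1 (line_reflection u) = line_through u"
proof (intro set_eqI iffI)
  fix x assume "x \<in> eigenspace1 (line_reflection u)"
  then have "line_reflection u *v x = x" by (simp add: eigenspace1_def)
  then have "2 * hinner x u * u$i - x$i = x$i" for i by (metis line_reflection_mult_vec)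
  then have "x = hinner x u *s u" by (simp add: vec_eq_iff)
  then show "x \<in> line_through u" unfolding mem_line_through by blast
next
  fix x assume "x \<in> line_through u"
  then obtain c where x: "x = c *s u" by (auto simp: mem_line_through)
  have "hinner x u = c" using hinner_scale[of c u 1 u] assms by (simp add: x)
  then have "line_reflection u *v x = x" by (simp add: vec_eq_iff line_reflection_mult_vec x)
  then show "x \<in> eigenspace1 (line_reflection u)" by (simp add: eigenspace1_def)
qed

lemma Collect_complex_line_eq:
  "Collect complex_line = line_through ` {u. hinner u u = 1}"
proof (intro subset_antisym subsetI)
  fix L assume "L \<in> Collect complex_line"
  then obtain v where v: "v \<noteq> 0" "L = line_through v"
    by (auto simp: complex_line_iff_line_through)
  obtain t where t: "t \<noteq> 0" "hinner (t *s v) (t *s v) = 1" using normalize_vector[OF v(1)] by blast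
  have "line_through (t *s v) = line_through v"
  proof (intro set_eqI iffI)
    fix x assume "x \<in> line_through (t *s v)"
    then obtain c where "x = (c * t) *s v" by (auto simp: mem_line_through vector_smult_assoc)
    then show "x \<in> line_through v" unfolding mem_line_through by blast
  next
    fix x assume "x \<in> line_through v"
    then obtain c where "x = c *s v" by (auto simp: mem_line_through)
    then have "x = (c / t) *s (t *s v)" using t(1) by (simp add: vector_smult_assoc)
    then show "x \<in> line_through (t *s v)" unfolding mem_line_through by blast
  qed
  then show "L \<in> line_through ` {u. hinner u u = 1}" using t(2) v(2) by blast
qed (auto simp: complex_line_iff_line_through dest: hinner_self_eq_1_nonzero)

lemma line_reflection_eq_if_line_through_eq:
  assumes "hinner u u = 1" "hinner w w = 1" and "line_through u = line_through w"
  shows "line_reflection u = line_reflection w"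
proof -
  have "w \<in> line_through u" using assms(3) by (metis mem_line_through vector_smult_lid)
  then obtain c where w: "w = c *s u" by (auto simp: mem_line_through)
  have "c * cnj c = 1" using assms(1,2) hinner_scale[of c u c u] by (simp add: w)
  then show ?thesis by (simp add: vec_eq_iff line_reflection_nth w)
qed

lemma herm_orth_line_through_iff:
  "herm_orth (line_through u) (line_through w) \<longleftrightarrow> hinner u w = 0"
proof
  assume "herm_orth (line_through u) (line_through w)"
  moreover have "u \<in> line_through u" "w \<in> line_through w"
    by (metis mem_line_through vector_smult_lid)+
  ultimately show "hinner u w = 0" by (simp add: herm_orth_def)
qed (auto simp: herm_orth_def mem_line_through hinner_scale)

lemma involutions_product_eq_1:
  fixes A B C :: "'a::comm_ring_1^'n^'n"
  assumes "A ** A = mat 1" "B ** B = mat 1" "C ** C = mat 1" and "A ** B ** C = mat 1"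
  shows "A ** B = C" "B ** C = A" "C ** A = B"
proof -
  show AB: "A ** B = C"
    by (metis assms(3,4) matrix_mul_assoc matrix_mul_lid matrix_mul_rid)
  show BC: "B ** C = A"
    by (metis assms(1,4) matrix_mul_assoc matrix_mul_lid matrix_mul_rid)
  show "C ** A = B"
    by (metis BC assms(1,2) matrix_mul_assoc matrix_mul_lid matrix_mul_rid)
qed

lemma hinner_eq_0_if_line_reflection_mult:
  assumes "hinner a a = 1" "hinner b b = 1" "hinner c c = 1"
    and "line_reflection a ** line_reflection b = line_reflection c"
  shows "hinner a b = 0"
proof -
  have "4 * hinner b a * cnj (hinner b a) - 1 = -1"
    using mtrace_line_reflection_mult[OF assms(1,2)] assms(4) line_reflection_SU3(2)[OF assms(3)]
    by simp
  then have "hinner b a = 0" by simp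
  then show ?thesis using hinner_eq_0_commute by blast
qed

text \<open>Completeness of an orthonormal basis: the matrix \<open>M\<close> with rows \<open>a, b, c\<close> satisfies
  \<open>M M\<^sup>* = 1\<close>, hence \<open>M\<^sup>* M = 1\<close>, i.e.\ \<open>aa\<^sup>* + bb\<^sup>* + cc\<^sup>* = 1\<close>.\<close>
lemma orthonormal_3_outer_sum:
  assumes "hinner a a = 1" "hinner b b = 1" "hinner c c = 1"
    and "hinner a b = 0" "hinner b c = 0" "hinner a c = 0"
  shows "a$i * cnj (a$k) + b$i * cnj (b$k) + c$i * cnj (c$k) = (if i = k then 1 else 0)"
proof -
  define M :: cmat3 where "M = vector [a, b, c]"
  have "M ** cadjoint M = mat 1"
    using assms hinner_eq_0_commute
    by (auto simp: vec_eq_iff forall_3 matrix_mult_cadjoint_nth mat_def M_def)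
  then have "cadjoint M ** M = mat 1" by (rule matrix_left_right_inverse[THEN iffD1])
  then have "(cadjoint M ** M) $ k $ i = mat 1 $ k $ i" by simp
  then show ?thesis
    by (auto simp: matrix_mult_3_nth cadjoint_def mat_def M_def algebra_simps)
qed

lemma line_reflection_triple_eq_1_iff:
  assumes "hinner a a = 1" "hinner b b = 1" "hinner c c = 1"
  shows "line_reflection a ** line_reflection b ** line_reflection c = mat 1
    \<longleftrightarrow> hinner a b = 0 \<and> hinner b c = 0 \<and> hinner a c = 0"
proof
  assume "line_reflection a ** line_reflection b ** line_reflection c = mat 1"
  note products = involutions_product_eq_1[OF line_reflection_involution[OF assms(1)]
      line_reflection_involution[OF assms(2)] line_reflection_involution[OF assms(3)] this]
  show "hinner a b = 0 \<and> hinner b c = 0 \<and> hinner a c = 0"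
    using hinner_eq_0_if_line_reflection_mult[OF assms(1,2,3) products(1)]
      hinner_eq_0_if_line_reflection_mult[OF assms(2,3,1) products(2)]
      hinner_eq_0_if_line_reflection_mult[OF assms(3,1,2) products(3)] hinner_eq_0_commute
    by blast
next
  assume "hinner a b = 0 \<and> hinner b c = 0 \<and> hinner a c = 0"
  then have outer: "a$i * cnj (a$k) + b$i * cnj (b$k) = (if i = k then 1 else 0) - c$i * cnj (c$k)"
    for i k
    using orthonormal_3_outer_sum[OF assms, of i k] by (simp add: eq_diff_eq)
  have "hinner b a = 0" using \<open>hinner a b = 0 \<and> _\<close> hinner_eq_0_commute by blast
  have "line_reflection a ** line_reflection b = line_reflection c"
  proof -
    have "(line_reflection a ** line_reflection b) $ i $ k = line_reflection c $ i $ k" for i k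
    proof -
      have "(line_reflection a ** line_reflection b) $ i $ k
          = - 2 * (a$i * cnj (a$k) + b$i * cnj (b$k)) + (if i = k then 1 else 0)"
        unfolding line_reflection_mult by (simp add: \<open>hinner b a = 0\<close> algebra_simps)
      also have "\<dots> = line_reflection c $ i $ k"
        unfolding outer by (simp add: line_reflection_nth algebra_simps)
      finally show ?thesis .
    qed
    then show ?thesis by (simp add: vec_eq_iff)
  qed
  then show "line_reflection a ** line_reflection b ** line_reflection c = mat 1"
    by (simp add: line_reflection_involution[OF assms(3)])
qed

lemma bij_betw_eigenspace1:
  "bij_betw eigenspace1 {A \<in> SU3. mtrace A = -1} (Collect complex_line)"
  unfolding SU3_trace_minus_one_eq Collect_complex_line_eq
proof (rule bij_betw_imageI)
  show "inj_on eigenspace1 (line_reflection ` {u. hinner u u = 1})"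
    by (rule inj_onI)
      (auto simp: eigenspace1_line_reflection intro: line_reflection_eq_if_line_through_eq)
  show "eigenspace1 ` line_reflection ` {u. hinner u u = 1} = line_through ` {u. hinner u u = 1}"
    unfolding image_image by (rule image_cong) (simp_all add: eigenspace1_line_reflection)
qed

lemma trace_minus_one_triple_eq_1_iff_herm_orth:
  assumes "A \<in> {A \<in> SU3. mtrace A = -1}" "B \<in> {A \<in> SU3. mtrace A = -1}"
    "C \<in> {A \<in> SU3. mtrace A = -1}"
  shows "A ** B ** C = mat 1 \<longleftrightarrow>
    herm_orth (eigenspace1 A) (eigenspace1 B) \<and> herm_orth (eigenspace1 B) (eigenspace1 C) \<and>
    herm_orth (eigenspace1 A) (eigenspace1 C)"
proof -
  obtain a b c where "hinner a a = 1" "hinner b b = 1" "hinner c c = 1"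
    and "A = line_reflection a" "B = line_reflection b" "C = line_reflection c"
    using assms unfolding SU3_trace_minus_one_eq by auto
  then show ?thesis
    by (simp add: eigenspace1_line_reflection herm_orth_line_through_iff
        line_reflection_triple_eq_1_iff)
qed

lemma bij_betw_compose_PiE:
  assumes "bij_betw f S T"
  shows "bij_betw (\<lambda>r. \<lambda>e\<in>E. f (r e)) (E \<rightarrow>\<^sub>E S) (E \<rightarrow>\<^sub>E T)"
proof (rule bij_betwI[where g = "\<lambda>L. \<lambda>e\<in>E. inv_into S f (L e)"])
  show "(\<lambda>r. \<lambda>e\<in>E. f (r e)) \<in> (E \<rightarrow>\<^sub>E S) \<rightarrow> (E \<rightarrow>\<^sub>E T)"
    using assms by (auto simp: bij_betw_def)
  show "(\<lambda>L. \<lambda>e\<in>E. inv_into S f (L e)) \<in> (E \<rightarrow>\<^sub>E T) \<rightarrow> (E \<rightarrow>\<^sub>E S)"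
    using assms by (auto simp: bij_betw_def PiE_iff inv_into_into)
  show "(\<lambda>e\<in>E. inv_into S f ((\<lambda>e\<in>E. f (r e)) e)) = r" if "r \<in> E \<rightarrow>\<^sub>E S" for r
    using that assms by (auto simp: bij_betw_def PiE_iff extensional_def)
  show "(\<lambda>e\<in>E. f ((\<lambda>e\<in>E. inv_into S f (L e)) e)) = L" if "L \<in> E \<rightarrow>\<^sub>E T" for L
    using that assms by (auto simp: bij_betw_def PiE_iff extensional_def f_inv_into_f)
qed

lemma web_incident_edges:
  assumes "web E V src tgt tri" "v \<in> V" "tri v = (a, b, c)"
  shows "a \<in> E" "b \<in> E" "c \<in> E"
  using assms unfolding web_def by (fastforce split: prod.splits)+

theorem mainTheorem5:
  fixes E :: "'e set" and V :: "'v set" and src tgt :: "'e \<Rightarrow> 'v"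
    and tri :: "'v \<Rightarrow> 'e \<times> 'e \<times> 'e"
  assumes "web E V src tgt tri"
  shows "bij_betw (\<lambda>r. \<lambda>e\<in>E. eigenspace1 (r e))
           (trace_minus_one_reps E V tri) (orth_line_assignments E V tri)"
proof -
  let ?S = "{A \<in> SU3. mtrace A = -1}"
  have reps: "trace_minus_one_reps E V tri = {r \<in> E \<rightarrow>\<^sub>E ?S.
      \<forall>v\<in>V. case tri v of (a, b, c) \<Rightarrow> r a ** r b ** r c = mat 1}"
    by (auto simp: trace_minus_one_reps_def)
  have "(\<forall>v\<in>V. case tri v of (a, b, c) \<Rightarrow> r a ** r b ** r c = mat 1) \<longleftrightarrow>
      (\<forall>v\<in>V. case tri v of (a, b, c) \<Rightarrow> let L = \<lambda>e\<in>E. eigenspace1 (r e) in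
         herm_orth (L a) (L b) \<and> herm_orth (L b) (L c) \<and> herm_orth (L a) (L c))"
    if "r \<in> E \<rightarrow>\<^sub>E ?S" for r
    using that web_incident_edges[OF assms] trace_minus_one_triple_eq_1_iff_herm_orth
    by (auto split: prod.splits simp: PiE_iff)
  then show ?thesis
    unfolding reps orth_line_assignments_def
    by (intro bij_betw_Collect bij_betw_compose_PiE bij_betw_eigenspace1) simp
qed

end
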